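(* Let $R_1,\dots,R_M\subseteq\mathbb{R}^N$ be finitely many pairwise disjoint sets whose union is $\mathbb{R}^N$, and let $f:\mathbb{R}^N\to\mathbb{R}$ be continuous such that for each $i$, $|f(x)-f(y)|\le\|x-y\|$ for all $x,y\in R_i$. Then $|f(x)-f(y)|\le\|x-y\|$ for all $x,y\in\mathbb{R}^N$.
   Context: $\|\cdot\|$ is the Euclidean norm. No measurability or regularity of the sets $R_i$ is assumed. *)

theory Defs
  imports "HOL-Analysis.Analysis"
begin

end

theory Submission
  imports Defs
begin

text \<open>By continuity, \<open>f\<close> is still 1-Lipschitz on the closures of the pieces, which are finitely
  many closed sets covering the space. Along the segment from \<open>x\<close> to \<open>y\<close> they pull back to
  finitely many closed sets covering \<open>[0, 1]\<close>, on each of which \<open>t \<mapsto> f (x + t (y - x))\<close> is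
  \<open>\<parallel>y - x\<parallel>\<close>-Lipschitz; on an interval of the real line such bounds glue together
  (\<open>lipschitz_on_closed_Union\<close>), giving \<open>\<bar>f x - f y\<bar> \<le> \<parallel>x - y\<parallel>\<close>.\<close>

lemma lipschitz_on_convex_closed_cover:
  fixes f :: "'a::real_normed_vector \<Rightarrow> 'b::metric_space"
  assumes "finite I"
    and closed: "\<And>i. i \<in> I \<Longrightarrow> closed (C i)"
    and lip: "\<And>i. i \<in> I \<Longrightarrow> L-lipschitz_on (C i) f"
    and "0 \<le> L" and "convex S" and cover: "S \<subseteq> (\<Union>i\<in>I. C i)"
  shows "L-lipschitz_on S f"
proof (rule lipschitz_onI)
  fix x y assume "x \<in> S" "y \<in> S"
  define p where "p t = x + t *\<^sub>R (y - x)" for t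
  have p_lip: "(norm (y - x))-lipschitz_on UNIV p"
  proof (rule lipschitz_onI)
    fix s t :: real
    have "p s - p t = (s - t) *\<^sub>R (y - x)"
      by (simp add: p_def algebra_simps)
    then show "dist (p s) (p t) \<le> norm (y - x) * dist s t"
      by (simp add: dist_norm dist_real_def)
  qed simp
  have "(L * norm (y - x))-lipschitz_on {0..1} (\<lambda>t. f (p t))"
  proof (rule lipschitz_on_closed_Union[where U = "\<lambda>i. p -` C i"])
    fix i assume "i \<in> I"
    have "continuous_on UNIV p"
      unfolding p_def by (intro continuous_intros)
    with closed[OF \<open>i \<in> I\<close>] show "closed (p -` C i)"
      by (rule closed_vimage)
    have "(norm (y - x))-lipschitz_on (p -` C i) p"
      by (rule lipschitz_on_subset[OF p_lip]) simp
    moreover have "L-lipschitz_on (p ` (p -` C i)) f"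
      by (rule lipschitz_on_subset[OF lip[OF \<open>i \<in> I\<close>]]) (rule image_vimage_subset)
    ultimately show "(L * norm (y - x))-lipschitz_on (p -` C i) (\<lambda>t. f (p t))"
      by (rule lipschitz_on_compose2)
  next
    show "{0..1} \<subseteq> (\<Union>i\<in>I. p -` C i)"
    proof
      fix t :: real assume "t \<in> {0..1}"
      moreover have "p t = (1 - t) *\<^sub>R x + t *\<^sub>R y"
        by (simp add: p_def algebra_simps)
      ultimately have "p t \<in> closed_segment x y"
        unfolding closed_segment_def by auto
      then have "p t \<in> S"
        using \<open>convex S\<close> \<open>x \<in> S\<close> \<open>y \<in> S\<close> convex_contains_segment by blast
      then show "t \<in> (\<Union>i\<in>I. p -` C i)"
        using cover by blast
    qed
  next
    show "0 \<le> L * norm (y - x)"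
      using \<open>0 \<le> L\<close> by simp
  qed (fact \<open>finite I\<close>)
  from lipschitz_onD[OF this, of 0 1] have "dist (f (p 0)) (f (p 1)) \<le> L * norm (y - x)"
    by simp
  then show "dist (f x) (f y) \<le> L * dist x y"
    by (simp add: p_def dist_norm norm_minus_commute)
qed (fact \<open>0 \<le> L\<close>)

theorem mainTheorem12:
  fixes R :: "nat \<Rightarrow> (real ^ 'n) set" and M :: nat and f :: "real ^ 'n \<Rightarrow> real"
  assumes disj: "\<And>i j. i \<in> {1..M} \<Longrightarrow> j \<in> {1..M} \<Longrightarrow> i \<noteq> j \<Longrightarrow> R i \<inter> R j = {}"
    and cover: "(\<Union>i\<in>{1..M}. R i) = UNIV"
    and cont: "continuous_on UNIV f"
    and lip: "\<And>i x y. i \<in> {1..M} \<Longrightarrow> x \<in> R i \<Longrightarrow> y \<in> R i \<Longrightarrow> \<bar>f x - f y\<bar> \<le> norm (x - y)"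
  shows "\<forall>x y. \<bar>f x - f y\<bar> \<le> norm (x - y)"
proof -
  have lip_closure: "1-lipschitz_on (closure (R i)) f" if "i \<in> {1..M}" for i
  proof (rule lipschitz_on_closure)
    show "1-lipschitz_on (R i) f"
      using lip[OF that] by (intro lipschitz_onI) (simp_all add: dist_real_def dist_norm)
    show "continuous_on (closure (R i)) f"
      using cont by (rule continuous_on_subset) simp
  qed
  have cover_closure: "UNIV \<subseteq> (\<Union>i\<in>{1..M}. closure (R i))"
    using cover closure_subset by blast
  have "1-lipschitz_on UNIV f"
    by (rule lipschitz_on_convex_closed_cover[OF finite_atLeastAtMost closed_closure lip_closure
          zero_le_one convex_UNIV cover_closure])
  then show ?thesis
    by (auto dest: lipschitz_onD simp: dist_real_def dist_norm)
qed

end
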